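(* Let $n,m$ be positive integers, $A_1,\dots,A_m\in\mathbb{S}_n$, $\mathcal{A}(X)=(\langle A_i,X\rangle)_{i=1}^m$, $\mathcal{A}^*(y)=\sum_i y_iA_i$, with $\mathcal{A}\mathcal{A}^*$ invertible; let $b\in\mathbb{R}^m$, $C\in\mathbb{S}_n$, $D:=\mathcal{A}^*((\mathcal{A}\mathcal{A}^* )^{-1}b)$. Assume the problem $\inf\{\langle D,S+C\rangle: y\in\mathbb{R}^m,\ S\succeq0,\ \operatorname{diag}(S)=\mathbf{1},\ S=\mathcal{A}^*(y)-C\}$ admits a KKT point. Let $0<\sigma_{\min}<\sigma_{\max}$ and let $\{\varepsilon_k\},\{\tau_k\}\subseteq(0,\infty)$ with $\sum_k\varepsilon_k<\infty$, $\sum_k\tau_k<\infty$. Consider sequences generated as follows: $y^0=0$, $\widetilde{X}^0=0$, and for $k=0,1,2,\dots$: choose $\sigma_k\in[\sigma_{\min},\sigma_{\max}]$, a positive integer $p_{k+1}$ and $Y^{k+1}\in\mathbb{R}^{n\times p_{k+1}}$ all of whose rows have Euclidean norm $1$; set $S^{k+1}=Y^{k+1}(Y^{k+1})^{\intercal}$, $y^{k+1}=(\mathcal{A}\mathcal{A}^* )^{-1}\mathcal{A}(S^{k+1}+C)$, $\widetilde{X}^{k+1}=\widetilde{X}^k-\sigma_k(\mathcal{A}^*(y^{k+1})-S^{k+1}-C)$, $z^{k+1}=\operatorname{diag}((\widetilde{X}^{k+1}+D)S^{k+1})$, $X^{k+1}=\widetilde{X}^{k+1}+D-\operatorname{Diag}(z^{k+1})$;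 and suppose that for every $k$, $\|X^{k+1}Y^{k+1}\|\le\varepsilon_k$ and $\lambda_{\min}(X^{k+1})\ge-\tau_k$. Let $R^k=\mathcal{A}^*(y^k)-S^k-C$. Then $\lim_{k\to\infty}\|R^k\|=0$.
   Context: $\mathbb{S}_n$ denotes real symmetric $n\times n$ matrices, $\langle A,B\rangle=\mathrm{Tr}(A^{\intercal}B)$, $\|\cdot\|$ the Frobenius norm, $\lambda_{\min}$ the smallest eigenvalue. For a square matrix $M$, $\operatorname{diag}(M)$ is its diagonal vector; for a vector $z$, $\operatorname{Diag}(z)$ is the diagonal matrix with diagonal $z$; $\mathbf{1}$ is the all-ones vector. A KKT point of the stated problem is a tuple $(S,y,X,z)\in\mathbb{S}_n\times\mathbb{R}^m\times\mathbb{S}_n\times\mathbb{R}^n$ with $S=\mathcal{A}^*(y)-C$, $S\succeq0$, $\operatorname{diag}(S)=\mathbf{1}$, $X\succeq0$, $\langle X,S\rangle=0$ and $\mathcal{A}(X+\operatorname{Diag}(z))=b$. *)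

theory Defs
  imports "Jordan_Normal_Form.Matrix" "Jordan_Normal_Form.Char_Poly"
    "Jordan_Normal_Form.Gauss_Jordan_Elimination" Complex_Main
begin

definition sym_mats :: "nat \<Rightarrow> real mat set" where
  "sym_mats n = {A. A \<in> carrier_mat n n \<and> transpose_mat A = A}"

definition mtrace :: "real mat \<Rightarrow> real" where
  "mtrace M = (\<Sum>i<dim_row M. M $$ (i, i))"

definition minner :: "real mat \<Rightarrow> real mat \<Rightarrow> real" where
  "minner A B = mtrace (transpose_mat A * B)"

definition fnorm :: "real mat \<Rightarrow> real" where
  "fnorm A = sqrt (minner A A)"

definition psd :: "nat \<Rightarrow> real mat \<Rightarrow> bool" where
  "psd n S \<longleftrightarrow> S \<in> sym_mats n \<and> (\<forall>x \<in> carrier_vec n. 0 \<le> x \<bullet> (S *\<^sub>v x))"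

definition lambda_min :: "real mat \<Rightarrow> real" where
  "lambda_min X = Min {l. eigenvalue X l}"

definition mdiag :: "real mat \<Rightarrow> real vec" where
  "mdiag M = vec (dim_row M) (\<lambda>i. M $$ (i, i))"

definition Diagm :: "real vec \<Rightarrow> real mat" where
  "Diagm z = mat (dim_vec z) (dim_vec z) (\<lambda>(i, j). if i = j then z $ i else 0)"

definition Aop :: "nat \<Rightarrow> (nat \<Rightarrow> real mat) \<Rightarrow> real mat \<Rightarrow> real vec" where
  "Aop m As X = vec m (\<lambda>i. minner (As i) X)"

definition Aadj :: "nat \<Rightarrow> nat \<Rightarrow> (nat \<Rightarrow> real mat) \<Rightarrow> real vec \<Rightarrow> real mat" where
  "Aadj n m As y = mat n n (\<lambda>(r, c). \<Sum>i<m. y $ i * As i $$ (r, c))"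

definition AAstar :: "nat \<Rightarrow> (nat \<Rightarrow> real mat) \<Rightarrow> real mat" where
  "AAstar m As = mat m m (\<lambda>(i, j). minner (As i) (As j))"

definition minv :: "real mat \<Rightarrow> real mat" where
  "minv M = the (mat_inverse M)"

definition ones :: "nat \<Rightarrow> real vec" where
  "ones n = vec n (\<lambda>_. 1)"

definition is_KKT :: "nat \<Rightarrow> nat \<Rightarrow> (nat \<Rightarrow> real mat) \<Rightarrow> real vec \<Rightarrow> real mat
    \<Rightarrow> real mat \<Rightarrow> real vec \<Rightarrow> real mat \<Rightarrow> real vec \<Rightarrow> bool" where
  "is_KKT n m As b C S y X z \<longleftrightarrow>
     S \<in> sym_mats n \<and> y \<in> carrier_vec m \<and> X \<in> sym_mats n \<and> z \<in> carrier_vec n \<and>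
     S = Aadj n m As y - C \<and> psd n S \<and> mdiag S = ones n \<and>
     psd n X \<and> minner X S = 0 \<and> Aop m As (X + Diagm z) = b"

end

theory Submission
  imports Defs "HOL-Analysis.Function_Topology" "HOL-Analysis.Convex"
begin

(* Fix a KKT point (Ss, ys, Xs, zs) and put U_k = Xt_k - (Xs + Diag zs - D). Both U_k and the
   residual R_(k+1) lie in the null space of A, and the update reads U_(k+1) = U_k - sigma_k R_(k+1), so
     ||U_k||^2 = ||U_(k+1)||^2 + 2 sigma_k <U_(k+1), R_(k+1)> + sigma_k^2 ||R_(k+1)||^2.
   Because A(U_(k+1)) = 0 we have -<U_(k+1), R_(k+1)> = <U_(k+1), S_(k+1) - Ss>. Now
   X_(k+1) = U_(k+1) + Xs + (diagonal matrix), and S_(k+1), Ss both have unit diagonal, so this equals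
   <X_(k+1), S_(k+1)> - <X_(k+1), Ss> - <Xs, S_(k+1)> <= sqrt n eps_k + n tau_k, using
   <X, Y Y^T> = <Y, X Y> <= ||Y|| ||X Y||, <X, Ss> >= lambda_min(X) tr Ss and <Xs, Y Y^T> >= 0.
   The error terms are summable, hence so is ||R_(k+1)||^2 by telescoping. *)

section \<open>Quadratic forms and a minimal eigenvector\<close>

definition quad_form :: "nat \<Rightarrow> (nat \<Rightarrow> nat \<Rightarrow> real) \<Rightarrow> (nat \<Rightarrow> real) \<Rightarrow> real" where
  "quad_form n a f = (\<Sum>i<n. f i * (\<Sum>j<n. a i j * f j))"

definition psd_form :: "nat \<Rightarrow> (nat \<Rightarrow> nat \<Rightarrow> real) \<Rightarrow> bool" where
  "psd_form n a \<longleftrightarrow> (\<forall>i<n. \<forall>j<n. a i j = a j i) \<and> (\<forall>f. 0 \<le> quad_form n a f)"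

lemma quad_form_restrict: "quad_form n a (restrict f {..<n}) = quad_form n a f"
  unfolding quad_form_def by (intro sum.cong refl) (auto intro!: sum.cong)

lemma quad_form_attains_min_on_sphere:
  assumes "0 < n"
  obtains f0 where "(\<Sum>i<n. (f0 i)\<^sup>2) = 1"
    and "\<And>f. (\<Sum>i<n. (f i)\<^sup>2) = 1 \<Longrightarrow> quad_form n a f0 \<le> quad_form n a f"
proof -
  let ?T = "product_topology (\<lambda>_. euclideanreal) {..<n}"
  let ?norm2 = "\<lambda>f. \<Sum>i<n. (f i)\<^sup>2"
  let ?K = "{f \<in> topspace ?T. ?norm2 f \<in> {1}} \<inter> (\<Pi>\<^sub>E i\<in>{..<n}. {-1..1})"
  define e where "e = restrict (\<lambda>i. if i = 0 then 1 else 0::real) {..<n}"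
  have "?norm2 e = (\<Sum>i<n. if i = 0 then 1 else 0)"
    by (intro sum.cong) (auto simp: e_def)
  also have "\<dots> = 1"
    using assms by simp
  finally have "e \<in> ?K"
    by (simp add: e_def PiE_iff)
  have proj: "continuous_map ?T euclideanreal (\<lambda>f. f i)" if "i < n" for i
    using continuous_map_product_projection[of i "{..<n}" "\<lambda>_. euclideanreal"] that by simp
  have "continuous_map ?T euclideanreal ?norm2"
    unfolding power2_eq_square by (intro continuous_map_sum continuous_map_real_mult proj) auto
  then have "closedin ?T {f \<in> topspace ?T. ?norm2 f \<in> {1}}"
    by (rule closedin_continuous_map_preimage) auto
  then have "compactin ?T ?K"
    by (intro closed_Int_compactin) (auto simp: compactin_PiE)
  moreover have "continuous_map ?T euclideanreal (quad_form n a)"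
    unfolding quad_form_def
    by (intro continuous_map_sum continuous_map_real_mult proj continuous_map_const[THEN iffD2]) auto
  ultimately have "compactin euclideanreal (quad_form n a ` ?K)"
    by (rule image_compactin)
  then have "compact (quad_form n a ` ?K)"
    by simp
  moreover have "quad_form n a ` ?K \<noteq> {}"
    using \<open>e \<in> ?K\<close> by blast
  ultimately have "\<exists>s\<in>quad_form n a ` ?K. \<forall>t\<in>quad_form n a ` ?K. s \<le> t"
    by (rule compact_attains_inf)
  then obtain f0 where f0: "f0 \<in> ?K" and "\<forall>t\<in>quad_form n a ` ?K. quad_form n a f0 \<le> t"
    by (blast dest: bex_imageD)
  then have min: "\<And>g. g \<in> ?K \<Longrightarrow> quad_form n a f0 \<le> quad_form n a g"
    by (blast dest: ball_imageD)
  show thesis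
  proof
    show "?norm2 f0 = 1" using f0 by auto
  next
    fix f :: "nat \<Rightarrow> real"
    assume f: "?norm2 f = 1"
    have "\<bar>f i\<bar> \<le> 1" if "i < n" for i
      using that f member_le_sum[of i "{..<n}" "\<lambda>i. (f i)\<^sup>2"] abs_le_square_iff[of "f i" 1] by simp
    then have "restrict f {..<n} \<in> ?K"
      using f by (auto simp: PiE_iff abs_le_iff)
    then show "quad_form n a f0 \<le> quad_form n a f"
      using min[of "restrict f {..<n}"] by (simp only: quad_form_restrict)
  qed
qed

lemma bilinear_form_commute:
  fixes a :: "nat \<Rightarrow> nat \<Rightarrow> real" and f g :: "nat \<Rightarrow> real"
  assumes "\<forall>i<n. \<forall>j<n. a i j = a j i"
  shows "(\<Sum>i<n. g i * (\<Sum>j<n. a i j * f j)) = (\<Sum>i<n. f i * (\<Sum>j<n. a i j * g j))"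
proof -
  have "(\<Sum>i<n. g i * (\<Sum>j<n. a i j * f j)) = (\<Sum>i<n. \<Sum>j<n. g i * a i j * f j)"
    by (simp add: sum_distrib_left mult.assoc)
  also have "\<dots> = (\<Sum>j<n. \<Sum>i<n. g i * a i j * f j)"
    by (rule sum.swap)
  also have "\<dots> = (\<Sum>j<n. f j * (\<Sum>i<n. a j i * g i))"
    using assms by (auto simp: sum_distrib_left mult_ac intro!: sum.cong)
  finally show ?thesis .
qed

lemma quad_form_add_scaled:
  assumes "\<forall>i<n. \<forall>j<n. a i j = a j i"
  shows "quad_form n a (\<lambda>i. f i + t * g i)
    = quad_form n a f + 2 * t * (\<Sum>i<n. f i * (\<Sum>j<n. a i j * g j)) + t\<^sup>2 * quad_form n a g"
proof -
  have "quad_form n a (\<lambda>i. f i + t * g i) = quad_form n a f + t * (\<Sum>i<n. f i * (\<Sum>j<n. a i j * g j))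
     + t * (\<Sum>i<n. g i * (\<Sum>j<n. a i j * f j)) + t\<^sup>2 * quad_form n a g"
    unfolding quad_form_def
    by (simp add: algebra_simps sum.distrib sum_distrib_left power2_eq_square)
  then show ?thesis
    using bilinear_form_commute[OF assms, of g f] by simp
qed

lemma quad_form_scaled: "quad_form n a (\<lambda>i. c * f i) = c\<^sup>2 * quad_form n a f"
  unfolding quad_form_def by (simp add: sum_distrib_left power2_eq_square mult_ac)

lemma quad_form_unit_vector: "r < n \<Longrightarrow> quad_form n a (\<lambda>i. of_bool (i = r)) = a r r"
  unfolding quad_form_def by (simp add: of_bool_def[symmetric])

lemma bilinear_form_unit_vector:
  fixes a :: "nat \<Rightarrow> nat \<Rightarrow> real" and f :: "nat \<Rightarrow> real"
  shows "r < n \<Longrightarrow> (\<Sum>i<n. f i * (\<Sum>j<n. a i j * of_bool (j = r))) = (\<Sum>i<n. f i * a i r)"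
  by (simp add: of_bool_def[symmetric])

lemma discrim_nonpos_of_nonneg:
  fixes q b c :: real
  assumes nonneg: "\<And>t. 0 \<le> q + 2 * t * b + t\<^sup>2 * c" and "0 \<le> c"
  shows "b\<^sup>2 \<le> c * q"
proof (cases "c = 0")
  case True
  have "b = 0"
  proof (rule ccontr)
    assume "b \<noteq> 0"
    then have "q + 2 * (- (q + 1) / (2 * b)) * b + (- (q + 1) / (2 * b))\<^sup>2 * c = -1"
      using True by (simp add: field_simps)
    then show False
      using nonneg[of "- (q + 1) / (2 * b)"] by simp
  qed
  then show ?thesis using True by simp
next
  case False
  then have "0 < c" using \<open>0 \<le> c\<close> by simp
  have "0 \<le> q + 2 * (- b / c) * b + (- b / c)\<^sup>2 * c" by (rule nonneg)
  also have "\<dots> = (c * q - b\<^sup>2) / c"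
    using False by (simp add: field_simps power2_eq_square)
  finally have "0 \<le> c * ((c * q - b\<^sup>2) / c)"
    using \<open>0 < c\<close> by (intro mult_nonneg_nonneg) auto
  then show ?thesis
    using False by simp
qed

lemma psd_form_cauchy_schwarz:
  assumes "psd_form n a"
  shows "(\<Sum>i<n. f i * (\<Sum>j<n. a i j * g j))\<^sup>2 \<le> quad_form n a g * quad_form n a f"
proof (rule discrim_nonpos_of_nonneg)
  have sym: "\<forall>i<n. \<forall>j<n. a i j = a j i" and nonneg: "\<And>h. 0 \<le> quad_form n a h"
    using assms by (auto simp: psd_form_def)
  show "0 \<le> quad_form n a f + 2 * t * (\<Sum>i<n. f i * (\<Sum>j<n. a i j * g j)) + t\<^sup>2 * quad_form n a g"
    for t
    using nonneg[of "\<lambda>i. f i + t * g i"] unfolding quad_form_add_scaled[OF sym] .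
  show "0 \<le> quad_form n a g"
    by (rule nonneg)
qed

lemma psd_form_diag_nonneg: "psd_form n a \<Longrightarrow> r < n \<Longrightarrow> 0 \<le> a r r"
  unfolding psd_form_def using quad_form_unit_vector by metis

lemma psd_form_zero_diag:
  assumes "psd_form n a" "r < n" "a r r = 0" "j < n"
  shows "a j r = 0"
proof -
  have "(a j r)\<^sup>2 \<le> a r r * a j j"
    using psd_form_cauchy_schwarz[OF assms(1), of "\<lambda>i. of_bool (i = j)" "\<lambda>i. of_bool (i = r)"]
    using assms(2,4) by (simp add: quad_form_unit_vector)
  then show ?thesis using assms(3) by simp
qed

lemma psd_form_kernel:
  assumes "psd_form n a" "quad_form n a f = 0" "i < n"
  shows "(\<Sum>j<n. a i j * f j) = 0"
proof -
  define h where "h i = (\<Sum>j<n. a i j * f j)" for i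
  have "(\<Sum>i<n. (h i)\<^sup>2)\<^sup>2 \<le> quad_form n a f * quad_form n a h"
    using psd_form_cauchy_schwarz[OF assms(1), of h f] by (simp add: h_def power2_eq_square)
  then have "(\<Sum>i<n. (h i)\<^sup>2) = 0"
    using assms(2) by simp
  then show ?thesis
    using assms(3) by (simp add: h_def sum_nonneg_eq_0_iff)
qed

lemma quad_form_ge_sphere_bound:
  assumes "\<And>g. (\<Sum>i<n. (g i)\<^sup>2) = 1 \<Longrightarrow> \<mu> \<le> quad_form n a g"
  shows "\<mu> * (\<Sum>i<n. (f i)\<^sup>2) \<le> quad_form n a f"
proof (cases "\<forall>i<n. f i = 0")
  case True
  then show ?thesis by (simp add: quad_form_def)
next
  case False
  define s where "s = (\<Sum>i<n. (f i)\<^sup>2)"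
  have "0 < s"
    using False by (auto simp: s_def intro!: sum_pos2)
  have "(\<Sum>i<n. (f i / sqrt s)\<^sup>2) = 1"
    using \<open>0 < s\<close> by (simp add: power_divide s_def flip: sum_divide_distrib)
  then have "\<mu> \<le> quad_form n a (\<lambda>i. (1 / sqrt s) * f i)"
    using assms by simp
  also have "\<dots> = (1 / sqrt s)\<^sup>2 * quad_form n a f"
    by (rule quad_form_scaled)
  also have "\<dots> = quad_form n a f / s"
    using \<open>0 < s\<close> by (simp add: power_divide)
  finally show ?thesis
    using \<open>0 < s\<close> by (simp add: s_def pos_le_divide_eq mult.commute)
qed

lemma sum_shift_diag_mult:
  fixes a :: "nat \<Rightarrow> nat \<Rightarrow> real"
  assumes "i < n"
  shows "(\<Sum>j<n. (a i j - (if i = j then \<mu> else 0)) * f j) = (\<Sum>j<n. a i j * f j) - \<mu> * f i"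
  using assms by (simp add: left_diff_distrib sum_subtractf if_distrib[where f = "\<lambda>x. x * _"] cong: if_cong)

lemma quad_form_shift_diag:
  "quad_form n (\<lambda>i j. a i j - (if i = j then \<mu> else 0)) f = quad_form n a f - \<mu> * (\<Sum>i<n. (f i)\<^sup>2)"
proof -
  have "quad_form n (\<lambda>i j. a i j - (if i = j then \<mu> else 0)) f
      = (\<Sum>i<n. f i * (\<Sum>j<n. a i j * f j) - \<mu> * (f i)\<^sup>2)"
    unfolding quad_form_def
    by (intro sum.cong refl) (simp add: sum_shift_diag_mult right_diff_distrib power2_eq_square)
  then show ?thesis
    by (simp add: quad_form_def sum_subtractf sum_distrib_left)
qed

lemma min_eigenvector_exists:
  assumes "0 < n" and sym: "\<forall>i<n. \<forall>j<n. a i j = a j i"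
  obtains f0 \<mu> where "(\<Sum>i<n. (f0 i)\<^sup>2) = 1" "\<And>i. i < n \<Longrightarrow> (\<Sum>j<n. a i j * f0 j) = \<mu> * f0 i"
    "\<And>f. \<mu> * (\<Sum>i<n. (f i)\<^sup>2) \<le> quad_form n a f"
proof -
  obtain f0 where f0: "(\<Sum>i<n. (f0 i)\<^sup>2) = 1"
    and min: "\<And>f. (\<Sum>i<n. (f i)\<^sup>2) = 1 \<Longrightarrow> quad_form n a f0 \<le> quad_form n a f"
    using quad_form_attains_min_on_sphere[OF \<open>0 < n\<close>] by blast
  define \<mu> where "\<mu> = quad_form n a f0"
  have lower: "\<mu> * (\<Sum>i<n. (f i)\<^sup>2) \<le> quad_form n a f" for f
    unfolding \<mu>_def using min by (rule quad_form_ge_sphere_bound)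
  define b where "b i j = a i j - (if i = j then \<mu> else 0)" for i j
  have b_form: "quad_form n b f = quad_form n a f - \<mu> * (\<Sum>i<n. (f i)\<^sup>2)" for f
    unfolding b_def by (rule quad_form_shift_diag)
  have "psd_form n b"
    using sym lower by (auto simp: psd_form_def b_form) (simp add: b_def)
  moreover have "quad_form n b f0 = 0"
    using f0 by (simp add: b_form \<mu>_def)
  ultimately have "(\<Sum>j<n. b i j * f0 j) = 0" if "i < n" for i
    using that by (rule psd_form_kernel)
  then have eigen: "(\<Sum>j<n. a i j * f0 j) = \<mu> * f0 i" if "i < n" for i
    using that sum_shift_diag_mult[of i n a \<mu> f0] by (simp add: b_def)
  show thesis
    using f0 eigen lower by (rule that)
qed

section \<open>Cholesky-type Gram factorization of positive semidefinite forms\<close>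

text \<open>If the pivot \<open>a r r\<close> of a positive semidefinite form vanishes, so does its row,
  and \<open>schur_compl r a = a\<close> because \<open>x / 0 = 0\<close>: the Cholesky-type induction below needs
  no case distinction on the pivot.\<close>

definition schur_compl :: "nat \<Rightarrow> (nat \<Rightarrow> nat \<Rightarrow> real) \<Rightarrow> nat \<Rightarrow> nat \<Rightarrow> real" where
  "schur_compl r a i j = a i j - a i r * a r j / a r r"

lemma psd_form_schur_compl:
  assumes psd: "psd_form n a" and "r < n"
  shows "psd_form n (schur_compl r a)"
  unfolding psd_form_def
proof (intro conjI allI impI)
  have sym: "\<forall>i<n. \<forall>j<n. a i j = a j i"
    using psd by (simp add: psd_form_def)
  show "schur_compl r a i j = schur_compl r a j i" if "i < n" "j < n" for i j
    using sym that \<open>r < n\<close> by (simp add: schur_compl_def mult.commute)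
  fix f
  define B where "B = (\<Sum>i<n. f i * a i r)"
  have row_r: "(\<Sum>j<n. a r j * f j) = B"
    unfolding B_def using sym \<open>r < n\<close> by (auto simp: mult.commute intro!: sum.cong)
  have "quad_form n (schur_compl r a) f = (\<Sum>i<n. f i * (\<Sum>j<n. a i j * f j) - f i * a i r * B / a r r)"
    unfolding quad_form_def schur_compl_def
    by (intro sum.cong refl) (simp add: left_diff_distrib sum_subtractf right_diff_distrib
        sum_distrib_left[symmetric] sum_divide_distrib[symmetric] row_r[symmetric] mult.assoc)
  also have "\<dots> = quad_form n a f - B\<^sup>2 / a r r"
    unfolding quad_form_def B_def
    by (simp add: sum_subtractf power2_eq_square sum_divide_distrib[symmetric] sum_distrib_right[symmetric])
  finally have compl: "quad_form n (schur_compl r a) f = quad_form n a f - B\<^sup>2 / a r r" .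
  have "B\<^sup>2 \<le> a r r * quad_form n a f"
    using psd_form_cauchy_schwarz[OF psd, of f "\<lambda>i. of_bool (i = r)"] \<open>r < n\<close>
    by (simp add: B_def bilinear_form_unit_vector quad_form_unit_vector)
  moreover have "0 \<le> a r r" "0 \<le> quad_form n a f"
    using psd \<open>r < n\<close> by (auto simp: psd_form_diag_nonneg psd_form_def)
  ultimately have "B\<^sup>2 / a r r \<le> quad_form n a f"
    by (cases "a r r = 0") (simp_all add: divide_le_eq mult.commute)
  then show "0 \<le> quad_form n (schur_compl r a) f"
    using compl by simp
qed

lemma schur_compl_pivot_row:
  assumes "psd_form n a" "r < n" "j < n"
  shows "schur_compl r a r j = 0"
proof (cases "a r r = 0")
  case True
  then have "a j r = 0"
    using psd_form_zero_diag assms by blast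
  then show ?thesis
    using True assms by (simp add: schur_compl_def psd_form_def)
qed (simp add: schur_compl_def)

lemma psd_form_gram_partial:
  assumes "r \<le> n" "psd_form n a" "\<forall>i<n. \<forall>j<n. r \<le> i \<or> r \<le> j \<longrightarrow> a i j = 0"
  shows "\<exists>w. \<forall>i<n. \<forall>j<n. a i j = (\<Sum>k<r. w k i * w k j)"
  using assms
proof (induction r arbitrary: a)
  case 0
  then show ?case by auto
next
  case (Suc r)
  then have "r < n" by simp
  have sym: "\<forall>i<n. \<forall>j<n. a i j = a j i"
    using Suc.prems(2) by (simp add: psd_form_def)
  let ?a' = "schur_compl r a"
  have "psd_form n ?a'"
    using Suc.prems(2) \<open>r < n\<close> by (rule psd_form_schur_compl)
  moreover have "?a' i j = 0" if ij: "i < n" "j < n" and out: "r \<le> i \<or> r \<le> j" for i j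
  proof -
    consider "i = r" | "j = r" | "Suc r \<le> i" | "Suc r \<le> j"
      using out by linarith
    then show ?thesis
    proof cases
      case 1
      then show ?thesis
        using schur_compl_pivot_row[OF Suc.prems(2) \<open>r < n\<close> ij(2)] by simp
    next
      case 2
      then show ?thesis
        using schur_compl_pivot_row[OF Suc.prems(2) \<open>r < n\<close> ij(1)] \<open>psd_form n ?a'\<close> ij
        by (simp add: psd_form_def)
    next
      case 3
      then have "a i j = 0" "a i r = 0"
        using Suc.prems(3) ij \<open>r < n\<close> by auto
      then show ?thesis by (simp add: schur_compl_def)
    next
      case 4
      then have "a i j = 0" "a r j = 0"
        using Suc.prems(3) ij \<open>r < n\<close> by auto
      then show ?thesis by (simp add: schur_compl_def)
    qed
  qed
  ultimately have "\<exists>w. \<forall>i<n. \<forall>j<n. ?a' i j = (\<Sum>k<r. w k i * w k j)"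
    using \<open>r < n\<close> by (intro Suc.IH) auto
  then obtain w where w: "\<And>i j. i < n \<Longrightarrow> j < n \<Longrightarrow> ?a' i j = (\<Sum>k<r. w k i * w k j)"
    by blast
  define v where "v i = a i r / sqrt (a r r)" for i
  have "0 \<le> a r r"
    using Suc.prems(2) \<open>r < n\<close> by (rule psd_form_diag_nonneg)
  have "a i j = (\<Sum>k<Suc r. (w(r := v)) k i * (w(r := v)) k j)" if ij: "i < n" "j < n" for i j
  proof -
    have "v i * v j = a i r * a r j / a r r"
      using \<open>0 \<le> a r r\<close> sym ij \<open>r < n\<close> by (simp add: v_def real_sqrt_mult_self)
    then have "a i j = ?a' i j + v i * v j"
      by (simp add: schur_compl_def)
    then show ?thesis
      using w[OF ij] by simp
  qed
  then show ?case by blast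
qed

lemma psd_form_gram:
  assumes "psd_form n a"
  obtains w where "\<And>i j. i < n \<Longrightarrow> j < n \<Longrightarrow> a i j = (\<Sum>k<n. w k i * w k j)"
  using psd_form_gram_partial[of n n a] assms by auto

section \<open>The Frobenius inner product\<close>

lemma minner_sum:
  assumes "A \<in> carrier_mat r c" "B \<in> carrier_mat r c"
  shows "minner A B = (\<Sum>j<c. \<Sum>i<r. A $$ (i, j) * B $$ (i, j))"
  using assms unfolding minner_def mtrace_def
  by (auto simp: scalar_prod_def atLeast0LessThan intro!: sum.cong)

context
  fixes r c :: nat
begin

lemma minner_comm: "A \<in> carrier_mat r c \<Longrightarrow> B \<in> carrier_mat r c \<Longrightarrow> minner A B = minner B A"
  by (simp add: minner_sum[of _ r c] mult.commute)

lemma minner_add_left: "A \<in> carrier_mat r c \<Longrightarrow> B \<in> carrier_mat r c \<Longrightarrow> M \<in> carrier_mat r c \<Longrightarrow>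
    minner (A + B) M = minner A M + minner B M"
  by (simp add: minner_sum[of _ r c] sum.distrib algebra_simps)

lemma minner_add_right: "A \<in> carrier_mat r c \<Longrightarrow> B \<in> carrier_mat r c \<Longrightarrow> M \<in> carrier_mat r c \<Longrightarrow>
    minner M (A + B) = minner M A + minner M B"
  by (simp add: minner_sum[of _ r c] sum.distrib algebra_simps)

lemma minner_diff_left: "A \<in> carrier_mat r c \<Longrightarrow> B \<in> carrier_mat r c \<Longrightarrow> M \<in> carrier_mat r c \<Longrightarrow>
    minner (A - B) M = minner A M - minner B M"
  by (simp add: minner_sum[of _ r c] minus_carrier_mat sum_subtractf algebra_simps)

lemma minner_diff_right: "A \<in> carrier_mat r c \<Longrightarrow> B \<in> carrier_mat r c \<Longrightarrow> M \<in> carrier_mat r c \<Longrightarrow>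
    minner M (A - B) = minner M A - minner M B"
  by (simp add: minner_sum[of _ r c] minus_carrier_mat sum_subtractf algebra_simps)

lemma minner_smult_left: "A \<in> carrier_mat r c \<Longrightarrow> M \<in> carrier_mat r c \<Longrightarrow>
    minner (s \<cdot>\<^sub>m A) M = s * minner A M"
  by (simp add: minner_sum[of _ r c] sum_distrib_left algebra_simps)

lemma minner_smult_right: "A \<in> carrier_mat r c \<Longrightarrow> M \<in> carrier_mat r c \<Longrightarrow>
    minner M (s \<cdot>\<^sub>m A) = s * minner M A"
  by (simp add: minner_sum[of _ r c] sum_distrib_left algebra_simps)

lemma minner_self_nonneg: "A \<in> carrier_mat r c \<Longrightarrow> 0 \<le> minner A A"
  by (simp add: minner_sum[of _ r c] sum_nonneg)

lemma minner_add_smult_self: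
  assumes "A \<in> carrier_mat r c" "B \<in> carrier_mat r c"
  shows "minner (A + s \<cdot>\<^sub>m B) (A + s \<cdot>\<^sub>m B) = minner A A + 2 * s * minner A B + s\<^sup>2 * minner B B"
proof -
  have "minner (A + s \<cdot>\<^sub>m B) (A + s \<cdot>\<^sub>m B) = minner A (A + s \<cdot>\<^sub>m B) + minner (s \<cdot>\<^sub>m B) (A + s \<cdot>\<^sub>m B)"
    using assms by (simp add: minner_add_left)
  also have "\<dots> = minner A A + s * minner A B + (s * minner B A + s * (s * minner B B))"
    using assms by (simp add: minner_add_right minner_smult_left minner_smult_right)
  finally show ?thesis
    using minner_comm[OF assms] by (simp add: power2_eq_square)
qed

lemma minner_le_fnorm_mult:
  assumes "A \<in> carrier_mat r c" "B \<in> carrier_mat r c"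
  shows "minner A B \<le> fnorm A * fnorm B"
proof -
  have as_sum: "minner M N = (\<Sum>(j, i)\<in>{..<c} \<times> {..<r}. M $$ (i, j) * N $$ (i, j))"
    if "M \<in> carrier_mat r c" "N \<in> carrier_mat r c" for M N
    unfolding minner_sum[OF that] by (simp add: sum.cartesian_product)
  have "(minner A B)\<^sup>2 \<le> minner A A * minner B B"
    using Cauchy_Schwarz_ineq_sum[of "\<lambda>(j, i). A $$ (i, j)" "\<lambda>(j, i). B $$ (i, j)" "{..<c} \<times> {..<r}"]
    unfolding as_sum[OF assms] as_sum[OF assms(1,1)] as_sum[OF assms(2,2)]
    by (simp add: case_prod_unfold power2_eq_square)
  then have "\<bar>minner A B\<bar> \<le> sqrt (minner A A * minner B B)"
    using real_sqrt_le_mono by fastforce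
  then show ?thesis
    by (simp add: fnorm_def real_sqrt_mult)
qed

end

section \<open>Symmetric and positive semidefinite matrices\<close>

lemma sym_mats_iff:
  "A \<in> sym_mats n \<longleftrightarrow> A \<in> carrier_mat n n \<and> (\<forall>i<n. \<forall>j<n. A $$ (i, j) = A $$ (j, i))"
  unfolding sym_mats_def
  by (auto intro!: eq_matI; metis carrier_matD(1,2) index_transpose_mat(1))

lemma sym_mats_carrier: "A \<in> sym_mats n \<Longrightarrow> A \<in> carrier_mat n n"
  by (simp add: sym_mats_def)

lemma sym_mats_add: "A \<in> sym_mats n \<Longrightarrow> B \<in> sym_mats n \<Longrightarrow> A + B \<in> sym_mats n"
  by (auto simp: sym_mats_iff)

lemma sym_mats_diff: "A \<in> sym_mats n \<Longrightarrow> B \<in> sym_mats n \<Longrightarrow> A - B \<in> sym_mats n"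
  by (auto simp: sym_mats_iff)

lemma sym_mats_smult: "A \<in> sym_mats n \<Longrightarrow> s \<cdot>\<^sub>m A \<in> sym_mats n"
  by (auto simp: sym_mats_iff)

lemma sym_mats_zero: "0\<^sub>m n n \<in> sym_mats n"
  by (simp add: sym_mats_iff)

lemma Diagm_carrier: "z \<in> carrier_vec n \<Longrightarrow> Diagm z \<in> carrier_mat n n"
  by (simp add: Diagm_def)

lemma Diagm_sym_mats: "z \<in> carrier_vec n \<Longrightarrow> Diagm z \<in> sym_mats n"
  by (simp add: sym_mats_iff Diagm_def)

lemma minner_Diagm:
  assumes "z \<in> carrier_vec n" "M \<in> carrier_mat n n"
  shows "minner (Diagm z) M = (\<Sum>i<n. z $ i * M $$ (i, i))"
proof -
  have "minner (Diagm z) M = (\<Sum>j<n. \<Sum>i<n. (if i = j then z $ i else 0) * M $$ (i, j))"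
    using assms by (simp add: minner_sum[of _ n n] Diagm_def)
  then show ?thesis
    by (simp add: if_distrib[where f = "\<lambda>x. x * _"] cong: if_cong)
qed

lemma unit_diagD:
  assumes "mdiag M = ones n" "i < n"
  shows "M $$ (i, i) = 1"
proof -
  have "dim_row M = n"
    using arg_cong[OF assms(1), of dim_vec] by (simp add: mdiag_def ones_def)
  then show ?thesis
    using arg_cong[OF assms(1), of "\<lambda>v. v $ i"] assms(2) by (simp add: mdiag_def ones_def)
qed

lemma minner_Diagm_unit_diag:
  assumes "z \<in> carrier_vec n" "M \<in> carrier_mat n n" "mdiag M = ones n"
  shows "minner (Diagm z) M = (\<Sum>i<n. z $ i)"
  using assms by (simp add: minner_Diagm unit_diagD)

lemma mtrace_unit_diag: "mdiag M = ones n \<Longrightarrow> M \<in> carrier_mat n n \<Longrightarrow> mtrace M = n"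
  by (simp add: mtrace_def unit_diagD)

lemma quad_form_vec: "S \<in> carrier_mat n n \<Longrightarrow> vec n f \<bullet> (S *\<^sub>v vec n f) = quad_form n (\<lambda>i j. S $$ (i, j)) f"
  unfolding quad_form_def by (auto simp: scalar_prod_def atLeast0LessThan intro!: sum.cong)

lemma psd_imp_psd_form: "psd n S \<Longrightarrow> psd_form n (\<lambda>i j. S $$ (i, j))"
  unfolding psd_def psd_form_def sym_mats_iff by (metis quad_form_vec vec_carrier)

lemma finite_eigenvalues: "X \<in> carrier_mat n n \<Longrightarrow> finite {l :: real. eigenvalue X l}"
proof -
  assume X: "X \<in> carrier_mat n n"
  have "char_poly X \<noteq> 0"
    using degree_monic_char_poly[OF X] by auto
  moreover have "{l. eigenvalue X l} \<subseteq> {l. poly (char_poly X) l = 0}"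
    using eigenvalue_root_char_poly[OF X] by auto
  ultimately show ?thesis
    using poly_roots_finite finite_subset by blast
qed

lemma lambda_min_le_quad_form:
  assumes "X \<in> sym_mats n"
  shows "lambda_min X * (\<Sum>i<n. (f i)\<^sup>2) \<le> quad_form n (\<lambda>i j. X $$ (i, j)) f"
proof (cases "n = 0")
  case True
  then show ?thesis by (simp add: quad_form_def)
next
  case False
  have X: "X \<in> carrier_mat n n" and sym: "\<forall>i<n. \<forall>j<n. X $$ (i, j) = X $$ (j, i)"
    using assms by (auto simp: sym_mats_iff)
  obtain f0 \<mu> where f0: "(\<Sum>i<n. (f0 i)\<^sup>2) = 1"
    and eigen: "\<And>i. i < n \<Longrightarrow> (\<Sum>j<n. X $$ (i, j) * f0 j) = \<mu> * f0 i"
    and lower: "\<And>f. \<mu> * (\<Sum>i<n. (f i)\<^sup>2) \<le> quad_form n (\<lambda>i j. X $$ (i, j)) f"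
    using min_eigenvector_exists[of n "\<lambda>i j. X $$ (i, j)"] False sym by auto
  have "vec n f0 \<noteq> 0\<^sub>v n"
  proof
    assume "vec n f0 = 0\<^sub>v n"
    then have "\<forall>i<n. f0 i = 0"
      by (metis index_vec index_zero_vec(1))
    then show False
      using f0 by simp
  qed
  moreover have "X *\<^sub>v vec n f0 = \<mu> \<cdot>\<^sub>v vec n f0"
    using X eigen by (auto intro!: eq_vecI simp: scalar_prod_def atLeast0LessThan)
  ultimately have "eigenvalue X \<mu>"
    using X unfolding eigenvalue_def eigenvector_def by (intro exI[of _ "vec n f0"]) auto
  then have "lambda_min X \<le> \<mu>"
    unfolding lambda_min_def using finite_eigenvalues[OF X] by (intro Min_le) auto
  then show ?thesis
    using lower[of f] by (meson mult_right_mono order_trans sum_nonneg zero_le_power2)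
qed

lemma minner_mult_transpose_quad_form:
  assumes X: "X \<in> carrier_mat n n" and Y: "Y \<in> carrier_mat n p"
  shows "minner X (Y * transpose_mat Y) = (\<Sum>l<p. quad_form n (\<lambda>i j. X $$ (i, j)) (\<lambda>i. Y $$ (i, l)))"
proof -
  have "minner X (Y * transpose_mat Y) = (\<Sum>j<n. \<Sum>i<n. \<Sum>l<p. X $$ (i, j) * Y $$ (i, l) * Y $$ (j, l))"
    using X Y by (simp add: minner_sum[of _ n n] scalar_prod_def lessThan_atLeast0 sum_distrib_left mult.assoc)
  also have "\<dots> = (\<Sum>i<n. \<Sum>j<n. \<Sum>l<p. X $$ (i, j) * Y $$ (i, l) * Y $$ (j, l))"
    by (rule sum.swap)
  also have "\<dots> = (\<Sum>i<n. \<Sum>l<p. \<Sum>j<n. X $$ (i, j) * Y $$ (i, l) * Y $$ (j, l))"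
    by (rule sum.cong[OF refl], rule sum.swap)
  also have "\<dots> = (\<Sum>l<p. \<Sum>i<n. \<Sum>j<n. X $$ (i, j) * Y $$ (i, l) * Y $$ (j, l))"
    by (rule sum.swap)
  also have "\<dots> = (\<Sum>l<p. quad_form n (\<lambda>i j. X $$ (i, j)) (\<lambda>i. Y $$ (i, l)))"
    unfolding quad_form_def by (simp add: sum_distrib_left mult_ac)
  finally show ?thesis .
qed

lemma minner_mult_transpose:
  assumes X: "X \<in> carrier_mat n n" and Y: "Y \<in> carrier_mat n p"
  shows "minner X (Y * transpose_mat Y) = minner Y (X * Y)"
  using assms
  by (simp add: minner_mult_transpose_quad_form minner_sum[of _ n p] quad_form_def scalar_prod_def
      atLeast0LessThan)

lemma minner_self_eq_mtrace:
  assumes "Y \<in> carrier_mat n p"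
  shows "minner Y Y = mtrace (Y * transpose_mat Y)"
proof -
  have "minner Y Y = (\<Sum>l<p. \<Sum>i<n. Y $$ (i, l) * Y $$ (i, l))"
    by (rule minner_sum[OF assms assms])
  also have "\<dots> = (\<Sum>i<n. \<Sum>l<p. Y $$ (i, l) * Y $$ (i, l))"
    by (rule sum.swap)
  finally show ?thesis
    using assms by (simp add: mtrace_def scalar_prod_def atLeast0LessThan)
qed

lemma psd_minner_mult_transpose_nonneg:
  assumes "psd n X" "Y \<in> carrier_mat n p"
  shows "0 \<le> minner X (Y * transpose_mat Y)"
proof -
  have "X \<in> carrier_mat n n"
    using assms(1) by (simp add: psd_def sym_mats_carrier)
  then show ?thesis
    using psd_imp_psd_form[OF assms(1)] assms(2)
    by (simp add: minner_mult_transpose_quad_form psd_form_def sum_nonneg)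
qed

lemma lambda_min_minner_mult_transpose:
  assumes X: "X \<in> sym_mats n" and Y: "Y \<in> carrier_mat n p"
  shows "lambda_min X * minner Y Y \<le> minner X (Y * transpose_mat Y)"
proof -
  have "lambda_min X * minner Y Y = (\<Sum>l<p. lambda_min X * (\<Sum>i<n. (Y $$ (i, l))\<^sup>2))"
    using Y by (simp add: minner_sum[of _ n p] sum_distrib_left power2_eq_square)
  also have "\<dots> \<le> (\<Sum>l<p. quad_form n (\<lambda>i j. X $$ (i, j)) (\<lambda>i. Y $$ (i, l)))"
    using X by (intro sum_mono lambda_min_le_quad_form)
  also have "\<dots> = minner X (Y * transpose_mat Y)"
    using minner_mult_transpose_quad_form[OF sym_mats_carrier[OF X] Y] by simp
  finally show ?thesis .
qed

lemma psd_eq_mult_transpose: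
  assumes "psd n S"
  obtains W where "W \<in> carrier_mat n n" "S = W * transpose_mat W"
proof -
  obtain w where w: "\<And>i j. i < n \<Longrightarrow> j < n \<Longrightarrow> S $$ (i, j) = (\<Sum>k<n. w k i * w k j)"
    using psd_form_gram[OF psd_imp_psd_form[OF assms]] by blast
  define W where "W = mat n n (\<lambda>(i, k). w k i)"
  have "S = W * transpose_mat W"
    using assms by (auto intro!: eq_matI simp: W_def w scalar_prod_def atLeast0LessThan psd_def sym_mats_def)
  then show thesis
    by (rule that[rotated]) (simp add: W_def)
qed

lemma lambda_min_mtrace_le_minner:
  assumes "X \<in> sym_mats n" "psd n S"
  shows "lambda_min X * mtrace S \<le> minner X S"
proof -
  obtain W where "W \<in> carrier_mat n n" "S = W * transpose_mat W"
    using psd_eq_mult_transpose[OF assms(2)] by blast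
  then show ?thesis
    using lambda_min_minner_mult_transpose[OF assms(1)] minner_self_eq_mtrace by metis
qed

lemma mult_transpose_sym_mats: "Y \<in> carrier_mat n p \<Longrightarrow> Y * transpose_mat Y \<in> sym_mats n"
  by (auto simp: sym_mats_iff scalar_prod_def mult.commute intro!: sum.cong)

lemma unit_rows_mdiag:
  assumes "Y \<in> carrier_mat n p" "\<forall>i<n. (\<Sum>j<p. (Y $$ (i, j))\<^sup>2) = 1"
  shows "mdiag (Y * transpose_mat Y) = ones n"
  using assms by (auto intro!: eq_vecI simp: mdiag_def ones_def scalar_prod_def atLeast0LessThan power2_eq_square)

section \<open>The operators \<open>\<A>\<close> and \<open>\<A>\<^sup>*\<close>\<close>

lemma invertible_mat_minv:
  fixes A :: "real mat"
  assumes A: "A \<in> carrier_mat n n" and "invertible_mat A"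
  shows "A * minv A = 1\<^sub>m n" "minv A \<in> carrier_mat n n"
proof -
  obtain B where AB: "A * B = 1\<^sub>m n" and BA: "B * A = 1\<^sub>m (dim_row B)"
    using assms unfolding invertible_mat_def inverts_mat_def by auto
  have "B \<in> carrier_mat n n"
    using AB BA A by (metis carrier_matD carrier_matI index_mult_mat(2,3) index_one_mat(2,3))
  then have "A \<in> Units (ring_mat TYPE(real) n ())"
    using AB BA A by (auto simp: Units_def ring_mat_simps)
  then obtain B' where "mat_inverse A = Some B'"
    using mat_inverse(1)[OF A] by fastforce
  then show "A * minv A = 1\<^sub>m n" "minv A \<in> carrier_mat n n"
    using mat_inverse(2)[OF A] by (auto simp: minv_def)
qed

lemma Aadj_carrier: "Aadj n m As u \<in> carrier_mat n n"
  by (simp add: Aadj_def)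

context
  fixes n m :: nat and As :: "nat \<Rightarrow> real mat"
  assumes As_carrier: "\<And>i. i < m \<Longrightarrow> As i \<in> carrier_mat n n"
begin

lemma Aop_diff: "M \<in> carrier_mat n n \<Longrightarrow> N \<in> carrier_mat n n \<Longrightarrow> Aop m As (M - N) = Aop m As M - Aop m As N"
  by (auto simp: Aop_def As_carrier minner_diff_right[of _ n n])

lemma Aop_smult: "M \<in> carrier_mat n n \<Longrightarrow> Aop m As (s \<cdot>\<^sub>m M) = s \<cdot>\<^sub>v Aop m As M"
  by (auto simp: Aop_def As_carrier minner_smult_right[of _ n n])

lemma Aop_zero: "Aop m As (0\<^sub>m n n) = 0\<^sub>v m"
  by (auto simp: Aop_def As_carrier minner_sum[of _ n n])

lemma minner_Aadj:
  assumes "V \<in> carrier_mat n n"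
  shows "minner V (Aadj n m As u) = (\<Sum>i<m. u $ i * minner (As i) V)"
proof -
  have "minner V (Aadj n m As u) = (\<Sum>c<n. \<Sum>r<n. \<Sum>i<m. u $ i * (As i $$ (r, c) * V $$ (r, c)))"
    using assms by (simp add: minner_sum[of _ n n] Aadj_def sum_distrib_left mult_ac)
  also have "\<dots> = (\<Sum>i<m. \<Sum>c<n. \<Sum>r<n. u $ i * (As i $$ (r, c) * V $$ (r, c)))"
    by (simp add: sum.swap[of _ "{..<m}"])
  also have "\<dots> = (\<Sum>i<m. u $ i * minner (As i) V)"
    using assms by (simp add: minner_sum[of _ n n] As_carrier sum_distrib_left)
  finally show ?thesis .
qed

lemma minner_Aadj_null: "V \<in> carrier_mat n n \<Longrightarrow> Aop m As V = 0\<^sub>v m \<Longrightarrow> minner V (Aadj n m As u) = 0"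
  by (simp add: minner_Aadj Aop_def vec_eq_iff)

lemma Aop_Aadj: "u \<in> carrier_vec m \<Longrightarrow> Aop m As (Aadj n m As u) = AAstar m As *\<^sub>v u"
  by (auto intro!: eq_vecI sum.cong simp: Aop_def AAstar_def minner_Aadj As_carrier minner_comm[of _ n n]
      scalar_prod_def atLeast0LessThan mult.commute)

lemma Aop_Aadj_minv:
  assumes "invertible_mat (AAstar m As)" "v \<in> carrier_vec m"
  shows "Aop m As (Aadj n m As (minv (AAstar m As) *\<^sub>v v)) = v"
proof -
  have G: "AAstar m As \<in> carrier_mat m m"
    by (simp add: AAstar_def)
  note inv = invertible_mat_minv[OF G assms(1)]
  have "Aop m As (Aadj n m As (minv (AAstar m As) *\<^sub>v v)) = AAstar m As *\<^sub>v (minv (AAstar m As) *\<^sub>v v)"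
    using inv(2) assms(2) by (simp add: Aop_Aadj)
  also have "\<dots> = (AAstar m As * minv (AAstar m As)) *\<^sub>v v"
    using G inv(2) assms(2) by (simp add: assoc_mult_mat_vec)
  finally show ?thesis
    using inv(1) assms(2) by simp
qed

lemma Aop_projection_residual:
  assumes "invertible_mat (AAstar m As)" "M \<in> carrier_mat n n"
  shows "Aop m As (Aadj n m As (minv (AAstar m As) *\<^sub>v Aop m As M) - M) = 0\<^sub>v m"
proof -
  have "Aop m As M \<in> carrier_vec m"
    by (simp add: Aop_def)
  then show ?thesis
    using assms by (simp add: Aop_diff Aadj_carrier Aop_Aadj_minv)
qed

lemma null_space_iterates:
  assumes "V 0 \<in> sym_mats n" "Aop m As (V 0) = 0\<^sub>v m"
    and "\<And>k. V (Suc k) = V k - \<sigma> k \<cdot>\<^sub>m Q k" "\<And>k. Q k \<in> sym_mats n" "\<And>k. Aop m As (Q k) = 0\<^sub>v m"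
  shows "V k \<in> sym_mats n \<and> Aop m As (V k) = 0\<^sub>v m"
  by (induction k) (auto simp: assms sym_mats_diff sym_mats_smult Aop_diff Aop_smult sym_mats_carrier)

lemma minner_residual_eq:
  assumes "U \<in> carrier_mat n n" "Aop m As U = 0\<^sub>v m" "S \<in> carrier_mat n n" "C \<in> carrier_mat n n"
    and "Ss = Aadj n m As ys - C"
  shows "minner U (Aadj n m As y - S - C) = minner U (Ss - S)"
  using assms by (simp add: minner_diff_right[of _ n n] minner_Aadj_null Aadj_carrier minus_carrier_mat)

end

lemma Aadj_sym_mats: "\<forall>i<m. As i \<in> sym_mats n \<Longrightarrow> Aadj n m As u \<in> sym_mats n"
  by (auto simp: sym_mats_iff Aadj_def intro!: sum.cong)

section \<open>Estimates at a KKT point\<close>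

lemma complementarity_bound:
  assumes U: "U \<in> sym_mats n" and Xs: "psd n Xs" and Ss: "psd n Ss" "mdiag Ss = ones n"
    and compl: "minner Xs Ss = 0"
    and Y: "Y \<in> carrier_mat n p" "mdiag (Y * transpose_mat Y) = ones n"
    and z: "zs \<in> carrier_vec n" "z \<in> carrier_vec n"
    and X: "X = U + Xs + Diagm zs - Diagm z"
  shows "minner U (Y * transpose_mat Y - Ss) \<le> sqrt n * fnorm (X * Y) - n * lambda_min X"
proof -
  let ?S = "Y * transpose_mat Y"
  have Uc: "U \<in> carrier_mat n n" and Xsc: "Xs \<in> carrier_mat n n" and Ssc: "Ss \<in> carrier_mat n n"
    using U Xs Ss by (auto simp: psd_def sym_mats_carrier)
  have Sc: "?S \<in> carrier_mat n n"
    using Y by simp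
  have "X \<in> sym_mats n"
    using U Xs z unfolding X by (intro sym_mats_add sym_mats_diff Diagm_sym_mats) (auto simp: psd_def)
  then have Xc: "X \<in> carrier_mat n n"
    by (rule sym_mats_carrier)
  have expand: "minner X M = minner U M + minner Xs M + (\<Sum>i<n. zs $ i) - (\<Sum>i<n. z $ i)"
    if "M \<in> carrier_mat n n" "mdiag M = ones n" for M
    using that Uc Xsc z unfolding X
    by (simp add: minner_add_left[of _ n n] minner_diff_left[of _ n n] minner_Diagm_unit_diag Diagm_carrier)
  have "minner X ?S = minner Y (X * Y)"
    by (rule minner_mult_transpose[OF Xc Y(1)])
  also have "\<dots> \<le> fnorm Y * fnorm (X * Y)"
    using Xc Y(1) by (intro minner_le_fnorm_mult[of _ n p]) auto
  also have "fnorm Y = sqrt n"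
    using Y Sc by (simp add: fnorm_def minner_self_eq_mtrace mtrace_unit_diag)
  finally have "minner X ?S \<le> sqrt n * fnorm (X * Y)" .
  moreover have "n * lambda_min X \<le> minner X Ss"
    using lambda_min_mtrace_le_minner[OF \<open>X \<in> sym_mats n\<close> Ss(1)] Ss(2) Ssc
    by (simp add: mtrace_unit_diag mult.commute)
  moreover have "0 \<le> minner Xs ?S"
    using Xs Y(1) by (rule psd_minner_mult_transpose_nonneg)
  moreover have "minner U (?S - Ss) = minner U ?S - minner U Ss"
    using Sc Ssc Uc by (rule minner_diff_right)
  ultimately show ?thesis
    using expand[OF Sc Y(2)] expand[OF Ssc Ss(2)] compl by linarith
qed

lemma KKT_shift_null:
  assumes As: "\<forall>i<m. As i \<in> sym_mats n" and inv: "invertible_mat (AAstar m As)"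
    and b: "b \<in> carrier_vec m" and kkt: "is_KKT n m As b C Ss ys Xs zs"
  defines "W \<equiv> Xs + Diagm zs - Aadj n m As (minv (AAstar m As) *\<^sub>v b)"
  shows "W \<in> sym_mats n \<and> Aop m As W = 0\<^sub>v m"
proof -
  have As_carrier: "\<And>i. i < m \<Longrightarrow> As i \<in> carrier_mat n n"
    using As by (simp add: sym_mats_carrier)
  have "Xs \<in> sym_mats n" "zs \<in> carrier_vec n" "Aop m As (Xs + Diagm zs) = b"
    using kkt by (auto simp: is_KKT_def)
  then show ?thesis
    using As b Aop_Aadj_minv[OF As_carrier inv b] unfolding W_def
    by (simp add: Aop_diff[OF As_carrier] sym_mats_carrier Diagm_carrier Aadj_carrier sym_mats_add
        sym_mats_diff Diagm_sym_mats Aadj_sym_mats)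
qed

lemma KKT_residual_angle:
  assumes As: "\<forall>i<m. As i \<in> sym_mats n" and C: "C \<in> carrier_mat n n"
    and kkt: "is_KKT n m As b C Ss ys Xs zs"
    and U: "U \<in> sym_mats n" "Aop m As U = 0\<^sub>v m"
    and Y: "Y \<in> carrier_mat n p" "\<forall>i<n. (\<Sum>j<p. (Y $$ (i, j))\<^sup>2) = 1"
    and z: "z \<in> carrier_vec n" and X: "X = U + Xs + Diagm zs - Diagm z"
  shows "- minner U (Aadj n m As y - Y * transpose_mat Y - C) \<le> sqrt n * fnorm (X * Y) - n * lambda_min X"
proof -
  have Ss: "psd n Ss" "mdiag Ss = ones n" "Ss = Aadj n m As ys - C"
    and Xs: "psd n Xs" "minner Xs Ss = 0" and zs: "zs \<in> carrier_vec n"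
    using kkt by (auto simp: is_KKT_def)
  have Uc: "U \<in> carrier_mat n n" and Ssc: "Ss \<in> carrier_mat n n" and Sc: "Y * transpose_mat Y \<in> carrier_mat n n"
    using U Ss Y by (auto simp: psd_def sym_mats_carrier)
  have "- minner U (Aadj n m As y - Y * transpose_mat Y - C) = minner U (Y * transpose_mat Y - Ss)"
    using minner_residual_eq[OF _ Uc U(2) Sc C Ss(3)] As Uc Sc Ssc
    by (simp add: sym_mats_carrier minner_diff_right[of _ n n])
  also have "\<dots> \<le> sqrt n * fnorm (X * Y) - n * lambda_min X"
    using complementarity_bound[OF U(1) Xs(1) Ss(1,2) Xs(2) Y(1) unit_rows_mdiag[OF Y] zs z X] .
  finally show ?thesis .
qed

section \<open>Convergence of the residuals\<close>

lemma summable_of_descent: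
  fixes a r e :: "nat \<Rightarrow> real"
  assumes a: "\<And>k. 0 \<le> a k" and r: "\<And>k. 0 \<le> r k" and "0 < c"
    and e: "summable e" "\<And>k. 0 \<le> e k"
    and descent: "\<And>k. a (Suc k) + c * r k \<le> a k + e k"
  shows "summable r"
proof (rule summableI_nonneg_bounded)
  fix N
  have "c * (\<Sum>k<N. r k) \<le> (\<Sum>k<N. a k - a (Suc k) + e k)"
    unfolding sum_distrib_left using descent by (intro sum_mono) (simp add: algebra_simps)
  also have "\<dots> = a 0 - a N + (\<Sum>k<N. e k)"
    by (simp add: sum.distrib sum_lessThan_telescope')
  also have "\<dots> \<le> a 0 + suminf e"
    using a[of N] sum_le_suminf[OF e(1), of "{..<N}"] e(2) by force
  finally show "(\<Sum>k<N. r k) \<le> (a 0 + suminf e) / c"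
    using \<open>0 < c\<close> by (simp add: field_simps)
qed (rule r)

lemma fnorm_tendsto_zero_of_descent:
  assumes carrier: "\<And>k. U k \<in> carrier_mat n n" "\<And>k. R k \<in> carrier_mat n n"
    and step: "\<And>k. U (Suc k) = U k - \<sigma> k \<cdot>\<^sub>m R k"
    and \<sigma>: "\<And>k. \<sigma>min \<le> \<sigma> k" "\<And>k. \<sigma> k \<le> \<sigma>max" "0 < \<sigma>min"
    and angle: "\<And>k. - minner (U (Suc k)) (R k) \<le> \<delta> k"
    and \<delta>: "summable \<delta>" "\<And>k. 0 \<le> \<delta> k"
  shows "(\<lambda>k. fnorm (R k)) \<longlonglongrightarrow> 0"
proof -
  define a where "a k = minner (U k) (U k)" for k
  define r where "r k = minner (R k) (R k)" for k
  have "a (Suc k) + \<sigma>min\<^sup>2 * r k \<le> a k + 2 * \<sigma>max * \<delta> k" for k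
  proof -
    have "U k = U (Suc k) + \<sigma> k \<cdot>\<^sub>m R k"
      using carrier(1)[of k] carrier(2)[of k] by (auto intro!: eq_matI simp: step)
    then have "a k = a (Suc k) + 2 * (\<sigma> k * minner (U (Suc k)) (R k)) + (\<sigma> k)\<^sup>2 * r k"
      using minner_add_smult_self[OF carrier(1)[of "Suc k"] carrier(2)[of k]] by (simp add: a_def r_def)
    moreover have "- (\<sigma> k * minner (U (Suc k)) (R k)) \<le> \<sigma>max * \<delta> k"
    proof -
      have "\<sigma> k * (- minner (U (Suc k)) (R k)) \<le> \<sigma> k * \<delta> k"
        using angle[of k] \<sigma>(1)[of k] \<sigma>(3) by (intro mult_left_mono) auto
      also have "\<dots> \<le> \<sigma>max * \<delta> k"
        using \<sigma>(2)[of k] \<delta>(2)[of k] by (rule mult_right_mono)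
      finally show ?thesis by simp
    qed
    moreover have "\<sigma>min\<^sup>2 * r k \<le> (\<sigma> k)\<^sup>2 * r k"
      using \<sigma>(1)[of k] \<sigma>(3) carrier(2)[of k]
      by (intro mult_right_mono power_mono) (auto simp: r_def minner_self_nonneg)
    ultimately show ?thesis
      by linarith
  qed
  moreover have "0 \<le> \<sigma>max"
    using \<sigma>(1)[of 0] \<sigma>(2)[of 0] \<sigma>(3) by linarith
  ultimately have "summable r"
    using \<sigma>(3) \<delta> minner_self_nonneg[OF carrier(1)] minner_self_nonneg[OF carrier(2)]
    by (intro summable_of_descent[of a r "\<sigma>min\<^sup>2" "\<lambda>k. 2 * \<sigma>max * \<delta> k"])
      (auto simp: a_def r_def intro: summable_mult)
  then have "(\<lambda>k. sqrt (r k)) \<longlonglongrightarrow> sqrt 0"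
    by (intro tendsto_real_sqrt summable_LIMSEQ_zero)
  then show ?thesis
    by (simp add: r_def fnorm_def)
qed


theorem lemma5p3:
  fixes n m :: nat and As :: "nat \<Rightarrow> real mat" and b :: "real vec" and C :: "real mat"
    and \<sigma>min \<sigma>max :: real and \<epsilon> \<tau> \<sigma> :: "nat \<Rightarrow> real" and p :: "nat \<Rightarrow> nat"
    and Y S Xt X :: "nat \<Rightarrow> real mat" and y z :: "nat \<Rightarrow> real vec"
  defines "D \<equiv> Aadj n m As (minv (AAstar m As) *\<^sub>v b)"
  assumes n_pos: "0 < n" and m_pos: "0 < m"
    and As_sym: "\<forall>i<m. As i \<in> sym_mats n"
    and AA_inv: "invertible_mat (AAstar m As)"
    and b_dim: "b \<in> carrier_vec m" and C_sym: "C \<in> sym_mats n"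
    and KKT: "\<exists>S0 y0 X0 z0. is_KKT n m As b C S0 y0 X0 z0"
    and sig: "0 < \<sigma>min" "\<sigma>min < \<sigma>max"
    and eps_pos: "\<forall>k. 0 < \<epsilon> k" and eps_sum: "summable \<epsilon>"
    and tau_pos: "\<forall>k. 0 < \<tau> k" and tau_sum: "summable \<tau>"
    and y0: "y 0 = 0\<^sub>v m" and Xt0: "Xt 0 = 0\<^sub>m n n"
    and sigma_k: "\<forall>k. \<sigma>min \<le> \<sigma> k \<and> \<sigma> k \<le> \<sigma>max"
    and p_pos: "\<forall>k. 0 < p (Suc k)"
    and Y_dim: "\<forall>k. Y (Suc k) \<in> carrier_mat n (p (Suc k))"
    and Y_rows: "\<forall>k. \<forall>i<n. (\<Sum>j<p (Suc k). (Y (Suc k) $$ (i, j))\<^sup>2) = 1"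
    and S_def: "\<forall>k. S (Suc k) = Y (Suc k) * transpose_mat (Y (Suc k))"
    and y_def: "\<forall>k. y (Suc k) = minv (AAstar m As) *\<^sub>v Aop m As (S (Suc k) + C)"
    and Xt_def: "\<forall>k. Xt (Suc k) = Xt k - \<sigma> k \<cdot>\<^sub>m (Aadj n m As (y (Suc k)) - S (Suc k) - C)"
    and z_def: "\<forall>k. z (Suc k) = mdiag ((Xt (Suc k) + D) * S (Suc k))"
    and X_def: "\<forall>k. X (Suc k) = Xt (Suc k) + D - Diagm (z (Suc k))"
    and XY_small: "\<forall>k. fnorm (X (Suc k) * Y (Suc k)) \<le> \<epsilon> k"
    and lam_min: "\<forall>k. lambda_min (X (Suc k)) \<ge> - \<tau> k"
  shows "(\<lambda>k. fnorm (Aadj n m As (y k) - S k - C)) \<longlonglongrightarrow> 0"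
proof -
  have As: "\<And>i. i < m \<Longrightarrow> As i \<in> carrier_mat n n" and Cc: "C \<in> carrier_mat n n"
    using As_sym C_sym by (auto simp: sym_mats_carrier)
  have Dc: "D \<in> carrier_mat n n"
    by (simp add: D_def Aadj_carrier)
  obtain Ss ys Xs zs where kkt: "is_KKT n m As b C Ss ys Xs zs"
    using KKT by blast
  then have Xsc: "Xs \<in> carrier_mat n n" and zs: "zs \<in> carrier_vec n"
    by (auto simp: is_KKT_def psd_def sym_mats_carrier)
  define R where "R k = Aadj n m As (y k) - S k - C" for k
  define U where "U k = Xt k - (Xs + Diagm zs - D)" for k
  have Yc: "Y (Suc k) \<in> carrier_mat n (p (Suc k))" for k
    using Y_dim by blast
  have Sc: "S (Suc k) \<in> carrier_mat n n" for k
    using Yc[of k] S_def by simp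
  have Xtc: "Xt k \<in> carrier_mat n n" for k
    using Cc by (cases k) (simp_all add: Xt0 Xt_def minus_carrier_mat)
  have "R (Suc k) = Aadj n m As (minv (AAstar m As) *\<^sub>v Aop m As (S (Suc k) + C)) - (S (Suc k) + C)" for k
    using Sc[of k] Cc by (auto intro!: eq_matI simp: R_def y_def Aadj_carrier)
  then have R_null: "R (Suc k) \<in> sym_mats n \<and> Aop m As (R (Suc k)) = 0\<^sub>v m" for k
    using As_sym C_sym Yc[of k] Sc[of k] Cc AA_inv
    by (simp add: Aop_projection_residual[OF As] sym_mats_diff sym_mats_add Aadj_sym_mats
        mult_transpose_sym_mats S_def)
  have U_step: "U (Suc k) = U k - \<sigma> k \<cdot>\<^sub>m R (Suc k)" for k
    using Xtc[of k] Cc Sc[of k] Diagm_carrier[OF zs] Dc Xsc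
    by (auto intro!: eq_matI simp: U_def R_def Xt_def Aadj_carrier)
  have U_null: "U k \<in> sym_mats n \<and> Aop m As (U k) = 0\<^sub>v m" for k
    using KKT_shift_null[OF As_sym AA_inv b_dim kkt, folded D_def] R_null U_step
    by (intro null_space_iterates[OF As, where V = U and \<sigma> = \<sigma> and Q = "\<lambda>k. R (Suc k)"])
      (auto simp: U_def Xt0 sym_mats_diff sym_mats_zero Aop_diff[OF As] Aop_zero[OF As] sym_mats_carrier)
  have angle: "- minner (U (Suc k)) (R (Suc k)) \<le> sqrt n * \<epsilon> k + n * \<tau> k" for k
  proof -
    \<comment> \<open>Only the length of \<open>z (Suc k)\<close> matters: the diagonal correction cancels against the
      unit diagonals of \<open>S (Suc k)\<close> and \<open>Ss\<close>.\<close>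
    have zc: "z (Suc k) \<in> carrier_vec n"
      using carrier_matD[OF Dc] by (simp add: z_def mdiag_def)
    have "X (Suc k) = U (Suc k) + Xs + Diagm zs - Diagm (z (Suc k))"
      using Xtc[of "Suc k"] Dc Diagm_carrier[OF zs] Diagm_carrier[OF zc] Xsc
      by (auto intro!: eq_matI simp: U_def X_def)
    then have "- minner (U (Suc k)) (R (Suc k))
        \<le> sqrt n * fnorm (X (Suc k) * Y (Suc k)) - n * lambda_min (X (Suc k))"
      using KKT_residual_angle[OF As_sym Cc kkt U_null[THEN conjunct1] U_null[THEN conjunct2]
          Yc spec[OF Y_rows] zc] by (simp add: R_def S_def)
    moreover have "sqrt n * fnorm (X (Suc k) * Y (Suc k)) \<le> sqrt n * \<epsilon> k"
      using XY_small by (intro mult_left_mono) auto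
    moreover have "n * (- \<tau> k) \<le> n * lambda_min (X (Suc k))"
      using lam_min by (intro mult_left_mono) auto
    ultimately show ?thesis
      by simp
  qed
  have "summable (\<lambda>k. sqrt n * \<epsilon> k + n * \<tau> k)"
    using eps_sum tau_sum by (intro summable_add summable_mult)
  moreover have "0 \<le> sqrt n * \<epsilon> k + n * \<tau> k" for k
    using eps_pos tau_pos by (simp add: less_imp_le)
  ultimately have "(\<lambda>k. fnorm (R (Suc k))) \<longlonglongrightarrow> 0"
    using U_null R_null sigma_k sig(1)
    by (intro fnorm_tendsto_zero_of_descent[where n = n and U = U and \<sigma> = \<sigma>, OF _ _ U_step _ _ _ angle])
      (auto simp: sym_mats_carrier)
  then show ?thesis
    unfolding R_def by (rule LIMSEQ_imp_Suc)
qed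

end
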